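(* Let $u\in R^{\times}$, $a\in R$. Then \[\mathcal{P}_a=(XG-qGX)^N-(1-q)^NG^NX^N+(1-q)^NaE^NG^N\] is a polynomial $H_N^q$-identity for $\mathcal{B}_{(u,a)}$.
   Context: $R$ is a commutative unital ring, $N\ge2$, and $q\in R$ a root of the $N$-th cyclotomic polynomial over $\mathbb{Z}$. $H_N^q$ is the Taft Hopf algebra over $R$: generated by $g,x$ with $g^N=1$, $x^N=0$, $xg=qgx$, $\Delta(g)=g\otimes g$, $\Delta(x)=1\otimes x+x\otimes g$, $\varepsilon(g)=1$, $\varepsilon(x)=0$, free over $R$ with basis $\{g^mx^n:0\le m,n<N\}$. $\mathcal{B}_{(u,a)}$ is the $R$-algebra generated by $v_g,v_x$ with $v_g^N=u$, $v_x^N=a$, $v_xv_g=qv_gv_x$, a right $H_N^q$-comodule algebra via $v_g\mapsto v_g\otimes g$, $v_x\mapsto1\otimes x+v_x\otimes g$. Let $Z_i^H$ ($i\ge1$) be copies $\{Z_i^h:h\in H_N^q\}$ of the $R$-module $H_N^q$, $T=T(\bigoplus_iZ_i^H)$ the tensor algebra with coaction $\delta(Z_i^h)=\sum Z_i^{h_1}\otimes h_2$, and $E=Z_1^1$, $G=Z_1^g$, $X=Z_1^x$. An element $P\in T$ is a polynomial $H_N^q$-identity for a right $H_N^q$-comodule algebra $B$ if $f(P)=0$ for every right $H_N^q$-comodule algebra map $f:T\to B$. *)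

theory Defs
  imports Complex_Main "HOL-Computational_Algebra.Polynomial"
begin

definition cyclotomic_poly :: "nat \<Rightarrow> int poly" where
  "cyclotomic_poly N = (THE p. map_poly of_int p =
     (\<Prod>k\<in>{k. k < N \<and> coprime k N}. [:- cis (2 * pi * real k / real N), 1:]))"

text \<open>An element of the Taft algebra H, of B, is a coefficient function on the grid:
  h = sum of h(m,n) g^m x^n, resp. b = sum of b(m,n) v_g^m v_x^n.  Values off the grid
  are ignored (all equalities are tested on the grid only).\<close>

definition grid :: "nat \<Rightarrow> (nat \<times> nat) set" where
  "grid N = {..<N} \<times> {..<N}"

definition hbasis :: "nat \<times> nat \<Rightarrow> nat \<times> nat \<Rightarrow> 'r::comm_ring_1" where
  "hbasis k = (\<lambda>p. if p = k then 1 else 0)"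

text \<open>Multiplication in the Taft algebra: (g^a x^b)(g^c x^d) = q^(bc) g^(a+c mod N) x^(b+d),
  which vanishes when b+d >= N.\<close>
definition hmul :: "nat \<Rightarrow> 'r::comm_ring_1 \<Rightarrow> (nat \<times> nat \<Rightarrow> 'r) \<Rightarrow> (nat \<times> nat \<Rightarrow> 'r) \<Rightarrow> nat \<times> nat \<Rightarrow> 'r" where
  "hmul N q h k = (\<lambda>p. \<Sum>i\<in>grid N. \<Sum>j\<in>grid N.
     if ((fst i + fst j) mod N, snd i + snd j) = p then q ^ (snd i * fst j) * h i * k j else 0)"

text \<open>Multiplication in B_(u,a): (v_g^a v_x^b)(v_g^c v_x^d) = q^(bc) v_g^(a+c) v_x^(b+d),
  reduced by v_g^N = u and v_x^N = a.\<close>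
definition bmul :: "nat \<Rightarrow> 'r::comm_ring_1 \<Rightarrow> 'r \<Rightarrow> 'r \<Rightarrow> (nat \<times> nat \<Rightarrow> 'r) \<Rightarrow> (nat \<times> nat \<Rightarrow> 'r) \<Rightarrow> nat \<times> nat \<Rightarrow> 'r" where
  "bmul N q u a b c = (\<lambda>p. \<Sum>i\<in>grid N. \<Sum>j\<in>grid N.
     if ((fst i + fst j) mod N, (snd i + snd j) mod N) = p
     then q ^ (snd i * fst j) * u ^ ((fst i + fst j) div N) * a ^ ((snd i + snd j) div N) * b i * c j
     else 0)"

text \<open>Since H is free with basis g^m x^n, an element of M \<otimes> H is written uniquely as
  sum over l of F(l) \<otimes> (basis element l); we represent it by F :: grid \<Rightarrow> M.
  For an algebra M (whose elements are 'r-valued functions, multiplication mul),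
  the product in M \<otimes> H is (m \<otimes> h)(m' \<otimes> h') = m m' \<otimes> h h'.\<close>

definition tens_mul :: "nat \<Rightarrow> 'r::comm_ring_1 \<Rightarrow> (('y \<Rightarrow> 'r) \<Rightarrow> ('y \<Rightarrow> 'r) \<Rightarrow> ('y \<Rightarrow> 'r))
    \<Rightarrow> (nat \<times> nat \<Rightarrow> 'y \<Rightarrow> 'r) \<Rightarrow> (nat \<times> nat \<Rightarrow> 'y \<Rightarrow> 'r) \<Rightarrow> nat \<times> nat \<Rightarrow> 'y \<Rightarrow> 'r" where
  "tens_mul N q mul F G = (\<lambda>p y. \<Sum>k\<in>grid N. \<Sum>l\<in>grid N.
     if ((fst k + fst l) mod N, snd k + snd l) = p then q ^ (snd k * fst l) * mul (F k) (G l) y else 0)"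

definition tens_one :: "('y \<Rightarrow> 'r::comm_ring_1) \<Rightarrow> nat \<times> nat \<Rightarrow> 'y \<Rightarrow> 'r" where
  "tens_one one = (\<lambda>p. if p = (0, 0) then one else (\<lambda>_. 0))"

definition tens_pow :: "nat \<Rightarrow> 'r::comm_ring_1 \<Rightarrow> (('y \<Rightarrow> 'r) \<Rightarrow> ('y \<Rightarrow> 'r) \<Rightarrow> ('y \<Rightarrow> 'r))
    \<Rightarrow> ('y \<Rightarrow> 'r) \<Rightarrow> (nat \<times> nat \<Rightarrow> 'y \<Rightarrow> 'r) \<Rightarrow> nat \<Rightarrow> nat \<times> nat \<Rightarrow> 'y \<Rightarrow> 'r" where
  "tens_pow N q mul one F n = (tens_mul N q mul F ^^ n) (tens_one one)"

text \<open>g \<otimes> g (resp. v_g \<otimes> g), and 1 \<otimes> x + x \<otimes> g (resp. 1 \<otimes> x + v_x \<otimes> g).\<close>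
definition gen_g :: "nat \<times> nat \<Rightarrow> nat \<times> nat \<Rightarrow> 'r::comm_ring_1" where
  "gen_g = (\<lambda>p. if p = (1, 0) then hbasis (1, 0) else (\<lambda>_. 0))"

definition gen_x :: "nat \<times> nat \<Rightarrow> nat \<times> nat \<Rightarrow> 'r::comm_ring_1" where
  "gen_x = (\<lambda>p. if p = (0, 1) then hbasis (0, 0)
               else if p = (1, 0) then hbasis (0, 1) else (\<lambda>_. 0))"

definition comult :: "nat \<Rightarrow> 'r::comm_ring_1 \<Rightarrow> nat \<times> nat \<Rightarrow> nat \<times> nat \<Rightarrow> nat \<times> nat \<Rightarrow> 'r" where
  "comult N q k = tens_mul N q (hmul N q)
      (tens_pow N q (hmul N q) (hbasis (0, 0)) gen_g (fst k))
      (tens_pow N q (hmul N q) (hbasis (0, 0)) gen_x (snd k))"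

definition bcoact_basis :: "nat \<Rightarrow> 'r::comm_ring_1 \<Rightarrow> 'r \<Rightarrow> 'r \<Rightarrow> nat \<times> nat \<Rightarrow> nat \<times> nat \<Rightarrow> nat \<times> nat \<Rightarrow> 'r" where
  "bcoact_basis N q u a k = tens_mul N q (bmul N q u a)
      (tens_pow N q (bmul N q u a) (hbasis (0, 0)) gen_g (fst k))
      (tens_pow N q (bmul N q u a) (hbasis (0, 0)) gen_x (snd k))"

definition bcoact :: "nat \<Rightarrow> 'r::comm_ring_1 \<Rightarrow> 'r \<Rightarrow> 'r \<Rightarrow> (nat \<times> nat \<Rightarrow> 'r) \<Rightarrow> nat \<times> nat \<Rightarrow> nat \<times> nat \<Rightarrow> 'r" where
  "bcoact N q u a b = (\<lambda>l z. \<Sum>k\<in>grid N. b k * bcoact_basis N q u a k l z)"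

text \<open>T = T(\<Oplus>_{i>=1} Z_i^H) is the free associative R-algebra on the basis letters
  Z_i^{g^m x^n}, represented by the letter (i,(m,n)).\<close>

type_synonym letter = "nat \<times> (nat \<times> nat)"

definition Tcar :: "nat \<Rightarrow> (letter list \<Rightarrow> 'r::comm_ring_1) set" where
  "Tcar N = {p. finite {w. p w \<noteq> 0} \<and>
     (\<forall>w. p w \<noteq> 0 \<longrightarrow> (\<forall>c\<in>set w. 1 \<le> fst c \<and> snd c \<in> grid N))}"

definition tmul :: "(letter list \<Rightarrow> 'r::comm_ring_1) \<Rightarrow> (letter list \<Rightarrow> 'r) \<Rightarrow> letter list \<Rightarrow> 'r" where
  "tmul p r = (\<lambda>w. \<Sum>i\<le>length w. p (take i w) * r (drop i w))"

definition tone :: "letter list \<Rightarrow> 'r::comm_ring_1" where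
  "tone = (\<lambda>w. if w = [] then 1 else 0)"

definition tletter :: "letter \<Rightarrow> letter list \<Rightarrow> 'r::comm_ring_1" where
  "tletter c = (\<lambda>w. if w = [c] then 1 else 0)"

definition tpow :: "(letter list \<Rightarrow> 'r::comm_ring_1) \<Rightarrow> nat \<Rightarrow> letter list \<Rightarrow> 'r" where
  "tpow p n = (tmul p ^^ n) tone"

text \<open>Coaction of T: Z_i^h \<mapsto> sum Z_i^{h_1} \<otimes> h_2, extended as algebra map T \<rightarrow> T \<otimes> H.\<close>
definition letter_coact :: "nat \<Rightarrow> 'r::comm_ring_1 \<Rightarrow> letter \<Rightarrow> nat \<times> nat \<Rightarrow> letter list \<Rightarrow> 'r" where
  "letter_coact N q c = (\<lambda>l w. \<Sum>j\<in>grid N. comult N q (snd c) l j * tletter (fst c, j) w)"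

definition word_coact :: "nat \<Rightarrow> 'r::comm_ring_1 \<Rightarrow> letter list \<Rightarrow> nat \<times> nat \<Rightarrow> letter list \<Rightarrow> 'r" where
  "word_coact N q w = foldr (\<lambda>c acc. tens_mul N q tmul (letter_coact N q c) acc) w (tens_one tone)"

definition Tcoact :: "nat \<Rightarrow> 'r::comm_ring_1 \<Rightarrow> (letter list \<Rightarrow> 'r) \<Rightarrow> nat \<times> nat \<Rightarrow> letter list \<Rightarrow> 'r" where
  "Tcoact N q p = (\<lambda>l w'. \<Sum>w\<in>{w. p w \<noteq> 0}. p w * word_coact N q w l w')"

text \<open>Equalities in B are tested coefficientwise on the grid.\<close>
definition comod_alg_map :: "nat \<Rightarrow> 'r::comm_ring_1 \<Rightarrow> 'r \<Rightarrow> 'r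
     \<Rightarrow> ((letter list \<Rightarrow> 'r) \<Rightarrow> nat \<times> nat \<Rightarrow> 'r) \<Rightarrow> bool" where
  "comod_alg_map N q u a f \<longleftrightarrow>
     (\<forall>p\<in>Tcar N. \<forall>r\<in>Tcar N. \<forall>z\<in>grid N. f (\<lambda>w. p w + r w) z = f p z + f r z) \<and>
     (\<forall>c. \<forall>p\<in>Tcar N. \<forall>z\<in>grid N. f (\<lambda>w. c * p w) z = c * f p z) \<and>
     (\<forall>p\<in>Tcar N. \<forall>r\<in>Tcar N. \<forall>z\<in>grid N. f (tmul p r) z = bmul N q u a (f p) (f r) z) \<and>
     (\<forall>z\<in>grid N. f tone z = hbasis (0, 0) z) \<and>
     (\<forall>p\<in>Tcar N. \<forall>l\<in>grid N. \<forall>z\<in>grid N. bcoact N q u a (f p) l z = f (Tcoact N q p l) z)"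

definition poly_H_identity :: "nat \<Rightarrow> 'r::comm_ring_1 \<Rightarrow> 'r \<Rightarrow> 'r \<Rightarrow> (letter list \<Rightarrow> 'r) \<Rightarrow> bool" where
  "poly_H_identity N q u a P \<longleftrightarrow>
     (\<forall>f. comod_alg_map N q u a f \<longrightarrow> (\<forall>z\<in>grid N. f P z = 0))"

text \<open>E = Z_1^1, G = Z_1^g, X = Z_1^x and the element P_a.\<close>
definition Pa :: "nat \<Rightarrow> 'r::comm_ring_1 \<Rightarrow> 'r \<Rightarrow> letter list \<Rightarrow> 'r" where
  "Pa N q a = (let E = tletter (1, (0, 0)); G = tletter (1, (1, 0)); X = tletter (1, (0, 1));
                  C = (\<lambda>w. tmul X G w - q * tmul G X w)
     in (\<lambda>w. tpow C N w - (1 - q) ^ N * tmul (tpow G N) (tpow X N) w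
              + (1 - q) ^ N * a * tmul (tpow E N) (tpow G N) w))"

end

theory Submission
  imports Defs
begin

text \<open>Let \<open>f : T \<rightarrow> B\<close> be a comodule algebra map. The coefficients of an
  element of B can be read off from its coaction, so colinearity forces \<open>f(E) = e\<close>,
  \<open>f(G) = c v\<^sub>g\<close> and \<open>f(X) = e v\<^sub>x + d v\<^sub>g\<close> for scalars \<open>c, d, e\<close>. Then
  \<open>f(XG - qGX) = (1 - q) c d v\<^sub>g\<^sup>2\<close>, whose \<open>N\<close>-th power is \<open>(1 - q)\<^sup>N c\<^sup>N d\<^sup>N u\<^sup>2\<close>,
  while \<open>f(G\<^sup>N) = c\<^sup>N u\<close>, \<open>f(E\<^sup>N) = e\<^sup>N\<close>, and, by the \<open>q\<close>-binomial theorem for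
  \<open>v\<^sub>x v\<^sub>g = q v\<^sub>g v\<^sub>x\<close>, \<open>f(X\<^sup>N) = d\<^sup>N u + e\<^sup>N a\<close>: the Gaussian binomials
  \<open>[N choose j]\<^sub>q\<close> with \<open>0 < j < N\<close> vanish because \<open>\<Phi>\<^sub>N\<close> divides them in \<open>\<int>[x]\<close>.
  Substituting these values, the three terms of \<open>P\<^sub>a\<close> cancel.\<close>

section \<open>Cyclotomic polynomials and Gaussian binomial coefficients\<close>

lemma map_poly_of_int_add:
  "map_poly (of_int :: int \<Rightarrow> 'a::comm_ring_1) (p + q) = map_poly of_int p + map_poly of_int q"
  by (simp add: poly_eq_iff coeff_map_poly)

lemma map_poly_of_int_diff:
  "map_poly (of_int :: int \<Rightarrow> 'a::comm_ring_1) (p - q) = map_poly of_int p - map_poly of_int q"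
  by (simp add: poly_eq_iff coeff_map_poly)

lemma map_poly_of_int_mult:
  "map_poly (of_int :: int \<Rightarrow> 'a::comm_ring_1) (p * q) = map_poly of_int p * map_poly of_int q"
  by (simp add: poly_eq_iff coeff_map_poly coeff_mult of_int_sum)

lemma map_poly_of_int_power:
  "map_poly (of_int :: int \<Rightarrow> 'a::comm_ring_1) (p ^ n) = map_poly of_int p ^ n"
  by (induction n) (simp_all add: map_poly_of_int_mult)

lemma map_poly_of_int_prod:
  "map_poly (of_int :: int \<Rightarrow> 'a::comm_ring_1) (prod f S) = (\<Prod>x\<in>S. map_poly of_int (f x))"
  by (induction S rule: infinite_finite_induct) (simp_all add: map_poly_of_int_mult)

lemma map_poly_of_int_X: "map_poly (of_int :: int \<Rightarrow> 'a::comm_ring_1) [:0, 1:] = [:0, 1:]"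
  by (simp add: poly_eq_iff coeff_map_poly coeff_pCons split: nat.split)

lemma map_poly_of_int_eq_iff:
  "map_poly (of_int :: int \<Rightarrow> 'a::{comm_ring_1, ring_char_0}) p = map_poly of_int q \<longleftrightarrow> p = q"
  by (simp add: poly_eq_iff coeff_map_poly)

lemma lead_coeff_map_poly_of_int:
  "lead_coeff (map_poly (of_int :: int \<Rightarrow> 'a::{comm_ring_1, ring_char_0}) p) = of_int (lead_coeff p)"
  by (simp add: degree_map_poly coeff_map_poly)

lemma prod_linear_factors_dvd:
  fixes p :: "'a::idom poly"
  assumes "finite S" "inj_on r S" "\<forall>s\<in>S. poly p (r s) = 0"
  shows "(\<Prod>s\<in>S. [:- r s, 1:]) dvd p"
  using assms
proof (induction S rule: finite_induct)
  case empty
  then show ?case by simp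
next
  case (insert b S)
  then have "(\<Prod>s\<in>S. [:- r s, 1:]) dvd p" by (auto intro: inj_on_subset)
  then obtain h where h: "p = (\<Prod>s\<in>S. [:- r s, 1:]) * h" by (elim dvdE)
  have "\<forall>s\<in>S. r b \<noteq> r s" using insert.prems(1) insert.hyps(2) by (auto simp: inj_on_def)
  then have "poly (\<Prod>s\<in>S. [:- r s, 1:]) (r b) \<noteq> 0" by (simp add: poly_prod insert.hyps(1))
  moreover have "poly p (r b) = 0" using insert.prems by simp
  ultimately have "[:- r b, 1:] dvd h" by (simp add: h poly_eq_0_iff_dvd)
  then obtain k where "h = [:- r b, 1:] * k" by (elim dvdE)
  then have "p = ([:- r b, 1:] * (\<Prod>s\<in>S. [:- r s, 1:])) * k"
    using h by (simp only: mult_ac)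
  then show ?case unfolding prod.insert[OF insert.hyps] by (rule dvdI)
qed

lemma monic_int_poly_quotient_integral:
  fixes A Q :: "int poly" and S :: "'a::{idom, ring_char_0} poly"
  assumes monic: "lead_coeff Q = 1" and eq: "map_poly of_int A = map_poly of_int Q * S"
  shows "\<exists>h. S = map_poly of_int h \<and> A = Q * h"
proof -
  have Q0: "Q \<noteq> 0" using monic by auto
  obtain h r where hr: "pseudo_divmod A Q = (h, r)" by (cases "pseudo_divmod A Q")
  have A: "A = Q * h + r" using pseudo_divmod(1)[OF Q0 hr] monic by simp
  have r: "r = 0 \<or> degree r < degree Q" using pseudo_divmod(2)[OF Q0 hr] .
  have Q'0: "map_poly (of_int :: int \<Rightarrow> 'a) Q \<noteq> 0"
    using Q0 map_poly_of_int_eq_iff[where 'a='a, of Q 0] by auto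
  have rem: "map_poly of_int Q * (S - map_poly of_int h) = (map_poly of_int r :: 'a poly)"
    using eq A by (simp add: map_poly_of_int_add map_poly_of_int_mult algebra_simps)
  have "S = map_poly of_int h"
  proof (rule ccontr)
    assume "S \<noteq> map_poly of_int h"
    then have "degree (map_poly of_int Q * (S - map_poly of_int h)) \<ge> degree (map_poly (of_int :: int \<Rightarrow> 'a) Q)"
      and "map_poly of_int Q * (S - map_poly of_int h) \<noteq> 0"
      using Q'0 by (simp_all add: degree_mult_eq)
    then show False using r rem by (auto simp: degree_map_poly)
  qed
  moreover from this have "r = 0"
    using rem map_poly_of_int_eq_iff[where 'a='a, of r 0] by simp
  ultimately show ?thesis using A by auto
qed

lemma monic_dvd_eq:
  fixes p q :: "'a::idom poly"
  assumes "lead_coeff p = 1" "lead_coeff q = 1" "degree p = degree q" "p dvd q"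
  shows "p = q"
proof -
  obtain h where h: "q = p * h" using assms(4) by (elim dvdE)
  have "p \<noteq> 0" "h \<noteq> 0" using assms h by auto
  then have "degree h = 0" using h assms(3) by (simp add: degree_mult_eq)
  moreover have "lead_coeff h = 1" using h assms by (simp add: lead_coeff_mult)
  ultimately have "h = 1" using degree_0_id[of h] by (simp add: one_pCons)
  then show ?thesis using h by simp
qed

lemma prod_roots_of_unity:
  assumes n: "n > 0"
  shows "(\<Prod>k<n. [:- cis (2 * pi * real k / real n), 1:]) = (monom 1 n - 1 :: complex poly)"
proof (rule monic_dvd_eq)
  have deg: "degree (monom 1 n - 1 :: complex poly) = n"
    using n degree_add_eq_left[of "-1" "monom (1::complex) n"] by (simp add: degree_monom_eq)
  then show "lead_coeff (monom 1 n - 1 :: complex poly) = 1"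
    using n by (simp add: coeff_diff)
  show "degree (\<Prod>k<n. [:- cis (2 * pi * real k / real n), 1:]) = degree (monom 1 n - 1 :: complex poly)"
    by (simp add: deg degree_prod_eq_sum_degree)
  show "(\<Prod>k<n. [:- cis (2 * pi * real k / real n), 1:]) dvd (monom 1 n - 1)"
    using bij_betw_roots_unity[OF n]
    by (intro prod_linear_factors_dvd) (auto simp: bij_betw_def poly_monom)
qed (simp add: lead_coeff_prod)

definition cyclotomic_complex :: "nat \<Rightarrow> complex poly" where
  "cyclotomic_complex n = (\<Prod>k\<in>{k. k < n \<and> coprime k n}. [:- cis (2 * pi * real k / real n), 1:])"

text \<open>Writing \<open>j / n\<close> in lowest terms \<open>k / d\<close> matches \<open>j < n\<close> with the pairs \<open>(d, k)\<close>,
  \<open>d dvd n\<close>, \<open>k < d\<close> coprime to \<open>d\<close>; this regroups the \<open>n\<close>-th roots of unity by order.\<close>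

lemma inj_on_divisor_fractions:
  fixes n :: nat
  assumes n: "n > 0"
  shows "inj_on (\<lambda>(d, k). k * (n div d)) (SIGMA d:{d. d dvd n}. {k. k < d \<and> coprime k d})"
proof (rule inj_onI, clarify)
  fix d k d' k'
  assume d: "d dvd n" "k < d" "coprime k d" and d': "d' dvd n" "k' < d'" "coprime k' d'"
    and eq: "k * (n div d) = k' * (n div d')"
  obtain m m' where m: "n = d * m" and m': "n = d' * m'" using d(1) d'(1) by (elim dvdE)
  have pos: "d > 0" "d' > 0" using n d(1) d'(1) by (auto intro!: gr0I)
  have "n div d = m" using m pos by simp
  moreover have "n div d' = m'" using m' pos by simp
  ultimately have "k * m = k' * m'" using eq by simp
  have "k * d' * n = (k * m) * (d * d')" unfolding m by (simp add: mult_ac)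
  also have "\<dots> = k' * d * n" unfolding \<open>k * m = k' * m'\<close> m' by (simp add: mult_ac)
  finally have kd: "k * d' = k' * d" using n by simp
  then have "d dvd k * d'" and "d' dvd k' * d" by (simp, metis dvd_triv_left mult.commute)
  then have "d dvd d'" and "d' dvd d" using d(3) d'(3)
    by (simp_all add: coprime_dvd_mult_right_iff coprime_commute)
  then have "d = d'" by (rule dvd_antisym)
  then show "d = d' \<and> k = k'" using kd pos by simp
qed

lemma image_divisor_fractions:
  fixes n :: nat
  assumes n: "n > 0"
  shows "(\<lambda>(d, k). k * (n div d)) ` (SIGMA d:{d. d dvd n}. {k. k < d \<and> coprime k d}) = {..<n}"
proof (intro equalityI subsetI)
  fix x assume "x \<in> (\<lambda>(d, k). k * (n div d)) ` (SIGMA d:{d. d dvd n}. {k. k < d \<and> coprime k d})"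
  then obtain d k where dk: "d dvd n" "k < d" "x = k * (n div d)" by auto
  obtain m where m: "n = d * m" using dk(1) by (elim dvdE)
  then have "d > 0" "m > 0" using n by auto
  then have "x = k * m" using dk m by simp
  also have "\<dots> < n" using dk(2) \<open>m > 0\<close> m by simp
  finally show "x \<in> {..<n}" by simp
next
  fix j assume j: "j \<in> {..<n}"
  define g where "g = gcd j n"
  have g0: "g > 0" using n by (simp add: g_def)
  obtain a b where a: "j = g * a" and b: "n = g * b"
    using gcd_dvd1[of j n] gcd_dvd2[of j n] unfolding g_def by (elim dvdE)
  have "n div g = b" and "j div g = a" using a b g0 by simp_all
  then have "coprime a b" using div_gcd_coprime[of j n] n by (simp add: g_def)
  moreover have "a < b" using j a b g0 by simp
  moreover have "b dvd n" and "n div b = g" using b n by simp_all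
  ultimately show "j \<in> (\<lambda>(d, k). k * (n div d)) ` (SIGMA d:{d. d dvd n}. {k. k < d \<and> coprime k d})"
    using a by (intro image_eqI[of _ _ "(b, a)"]) (auto simp: mult.commute)
qed

lemma bij_betw_divisor_fractions:
  fixes n :: nat
  assumes "n > 0"
  shows "bij_betw (\<lambda>(d, k). k * (n div d)) (SIGMA d:{d. d dvd n}. {k. k < d \<and> coprime k d}) {..<n}"
  using inj_on_divisor_fractions[OF assms] image_divisor_fractions[OF assms] by (simp add: bij_betw_def)

lemma prod_cyclotomic_complex_divisors:
  fixes n :: nat
  assumes n: "n > 0"
  shows "(\<Prod>d\<in>{d. d dvd n}. cyclotomic_complex d) = (monom 1 n - 1 :: complex poly)"
proof -
  have "(\<Prod>d\<in>{d. d dvd n}. cyclotomic_complex d) =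
        (\<Prod>(d, k)\<in>(SIGMA d:{d. d dvd n}. {k. k < d \<and> coprime k d}). [:- cis (2 * pi * real k / real d), 1:])"
    unfolding cyclotomic_complex_def using n by (subst prod.Sigma[symmetric]) auto
  also have "\<dots> = (\<Prod>(d, k)\<in>(SIGMA d:{d. d dvd n}. {k. k < d \<and> coprime k d}).
          [:- cis (2 * pi * real (k * (n div d)) / real n), 1:])"
  proof (rule prod.cong[OF refl], clarify)
    fix d k assume "d dvd n"
    then obtain m where m: "n = d * m" by (elim dvdE)
    then have "2 * pi * real (k * (n div d)) / real n = 2 * pi * real k / real d"
      using n by (simp add: field_simps)
    then show "[:- cis (2 * pi * real k / real d), 1:] = [:- cis (2 * pi * real (k * (n div d)) / real n), 1:]"
      by simp
  qed
  also have "\<dots> = (\<Prod>j<n. [:- cis (2 * pi * real j / real n), 1:])"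
    using prod.reindex_bij_betw[OF bij_betw_divisor_fractions[OF n],
        of "\<lambda>j. [:- cis (2 * pi * real j / real n), 1:]"]
    by (simp add: case_prod_unfold)
  also have "\<dots> = monom 1 n - 1" by (rule prod_roots_of_unity[OF n])
  finally show ?thesis .
qed

lemma lead_coeff_cyclotomic_complex: "lead_coeff (cyclotomic_complex n) = 1"
  unfolding cyclotomic_complex_def by (simp add: lead_coeff_prod)

text \<open>Induction on \<open>n\<close>: dividing \<open>X\<^sup>n - 1\<close> by the integral monic product of the
  \<open>cyclotomic_complex d\<close> for the proper divisors \<open>d\<close> of \<open>n\<close> leaves an integral quotient.\<close>

lemma cyclotomic_complex_integral:
  "n > 0 \<Longrightarrow> \<exists>p. map_poly of_int p = cyclotomic_complex n \<and> lead_coeff p = 1"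
proof (induction n rule: less_induct)
  case (less n)
  define D where "D = {d. d dvd n} - {n}"
  have "\<forall>d\<in>D. \<exists>p. map_poly of_int p = cyclotomic_complex d \<and> lead_coeff p = 1"
  proof (intro ballI less.IH)
    fix d assume "d \<in> D"
    then have "d dvd n" "d \<noteq> n" by (auto simp: D_def)
    then show "d < n" "d > 0" using less.prems by (auto intro: le_neq_implies_less dvd_imp_le)
  qed
  from bchoice[OF this] obtain pp
    where pp: "\<forall>d\<in>D. map_poly of_int (pp d) = cyclotomic_complex d \<and> lead_coeff (pp d) = 1"
    by blast
  define Q where "Q = (\<Prod>d\<in>D. pp d)"
  have monic: "lead_coeff Q = 1" unfolding Q_def using pp by (simp add: lead_coeff_prod)
  have "(\<Prod>d\<in>{d. d dvd n}. cyclotomic_complex d) = cyclotomic_complex n * (\<Prod>d\<in>D. cyclotomic_complex d)"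
    unfolding D_def by (rule prod.remove) (use less.prems in simp_all)
  moreover have "map_poly of_int Q = (\<Prod>d\<in>D. cyclotomic_complex d)"
    unfolding Q_def map_poly_of_int_prod using pp by simp
  ultimately have "map_poly of_int (monom 1 n - 1 :: int poly) = map_poly of_int Q * cyclotomic_complex n"
    using prod_cyclotomic_complex_divisors[OF less.prems]
    by (simp add: map_poly_of_int_diff map_poly_monom mult.commute)
  then obtain h where h: "cyclotomic_complex n = map_poly of_int h"
    using monic_int_poly_quotient_integral[OF monic] by blast
  then have "lead_coeff h = 1"
    using lead_coeff_cyclotomic_complex[of n] by (simp add: lead_coeff_map_poly_of_int)
  then show ?case using h by auto
qed

lemma map_poly_cyclotomic_poly:
  assumes "n > 0"
  shows "map_poly of_int (cyclotomic_poly n) = cyclotomic_complex n"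
proof -
  obtain p where p: "map_poly of_int p = cyclotomic_complex n"
    using cyclotomic_complex_integral[OF assms] by blast
  then have "\<exists>!p. map_poly of_int p = cyclotomic_complex n"
    using map_poly_of_int_eq_iff[where 'a=complex] by (intro ex1I[of _ p]) metis+
  then show ?thesis
    unfolding cyclotomic_poly_def cyclotomic_complex_def[symmetric] by (rule theI')
qed

lemma lead_coeff_cyclotomic_poly: "n > 0 \<Longrightarrow> lead_coeff (cyclotomic_poly n) = 1"
  using map_poly_cyclotomic_poly[of n] lead_coeff_cyclotomic_complex[of n]
    lead_coeff_map_poly_of_int[where 'a=complex, of "cyclotomic_poly n"] by simp

fun qbinom :: "'a::comm_ring_1 \<Rightarrow> nat \<Rightarrow> nat \<Rightarrow> 'a" where
  "qbinom x 0 j = (if j = 0 then 1 else 0)"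
| "qbinom x (Suc n) 0 = 1"
| "qbinom x (Suc n) (Suc j) = x ^ (n - j) * qbinom x n j + qbinom x n (Suc j)"

lemma qbinom_eq_0: "n < j \<Longrightarrow> qbinom x n j = 0"
  by (induction x n j rule: qbinom.induct) auto

lemma qbinom_diag [simp]: "qbinom x n n = 1"
  by (induction n) (auto simp: qbinom_eq_0)

lemma qbinom_0_right [simp]: "qbinom x n 0 = 1"
  by (cases n) auto

lemma poly_map_poly_qbinom:
  "poly (map_poly (of_int :: int \<Rightarrow> 'a::comm_ring_1) (qbinom [:0, 1:] n j)) x = qbinom x n j"
  by (induction "[:0, 1::int:]" n j rule: qbinom.induct)
     (simp_all add: map_poly_of_int_add map_poly_of_int_mult map_poly_of_int_power map_poly_of_int_X)

lemma qbinom_mult_prod: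
  "qbinom x n j * (\<Prod>i\<in>{1..j}. 1 - x ^ i) = (\<Prod>i<j. 1 - x ^ (n - i))"
proof (induction n arbitrary: j)
  case 0
  then show ?case by (cases j) (auto simp: prod.lessThan_Suc_shift)
next
  case (Suc n)
  show ?case
  proof (cases j)
    case 0
    then show ?thesis by simp
  next
    case (Suc j')
    define P where "P = (\<Prod>i<j'. 1 - x ^ (n - i))"
    define A where "A = (\<Prod>i\<in>{1..j'}. 1 - x ^ i)"
    have IH1: "qbinom x n j' * A = P" using Suc.IH[of j'] by (simp add: A_def P_def)
    have IH2: "qbinom x n (Suc j') * (A * (1 - x ^ Suc j')) = P * (1 - x ^ (n - j'))"
      using Suc.IH[of "Suc j'"] by (simp add: A_def P_def prod.nat_ivl_Suc' mult_ac)
    have lhs: "qbinom x (Suc n) j * (\<Prod>i\<in>{1..j}. 1 - x ^ i) =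
        x ^ (n - j') * (1 - x ^ Suc j') * (qbinom x n j' * A) + qbinom x n (Suc j') * (A * (1 - x ^ Suc j'))"
      by (simp add: Suc A_def prod.nat_ivl_Suc' algebra_simps)
    have rhs: "(\<Prod>i<j. 1 - x ^ (Suc n - i)) = (1 - x ^ Suc n) * P"
      by (simp add: Suc P_def prod.lessThan_Suc_shift del: prod.lessThan_Suc)
    show ?thesis
    proof (cases "j' \<le> n")
      case True
      then have "n - j' + Suc j' = Suc n" by simp
      then have "x ^ (n - j') * x ^ Suc j' = x ^ Suc n" by (metis power_add)
      then show ?thesis unfolding lhs rhs IH1 IH2 by (simp add: algebra_simps)
    next
      case False
      then have "P = 0" unfolding P_def by (intro prod_zero) (auto intro!: bexI[of _ n])
      then show ?thesis unfolding lhs rhs IH1 IH2 by simp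
    qed
  qed
qed

lemma primitive_root_power_neq_1:
  assumes N: "N > 0" and cop: "coprime k N" and i: "0 < i" "i < N"
  shows "cis (2 * pi * real k / real N) ^ i \<noteq> 1"
proof
  let ?root = "\<lambda>k. cis (2 * pi * real k / real N)"
  assume "?root k ^ i = 1"
  have "real (k * i) = real N * real (k * i div N) + real (k * i mod N)"
    by (metis div_mult_mod_eq of_nat_add of_nat_mult mult.commute)
  then have "2 * pi * real (k * i) / real N = 2 * pi * real (k * i mod N) / real N + 2 * pi * real (k * i div N)"
    using N by (simp add: field_simps)
  then have "?root k ^ i = cis (2 * pi * real (k * i mod N) / real N + 2 * pi * real (k * i div N))"
    by (simp add: DeMoivre mult_ac)
  also have "\<dots> = ?root (k * i mod N)"
    by (simp flip: cis_mult)
  finally have "?root k ^ i = ?root (k * i mod N)" .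
  then have eq: "?root (k * i mod N) = ?root 0"
    using \<open>?root k ^ i = 1\<close> by simp
  have inj: "inj_on ?root {..<N}"
    using bij_betw_roots_unity[OF N] by (simp add: bij_betw_def)
  have "k * i mod N = 0" using inj_onD[OF inj eq] N by simp
  then have "N dvd i" using cop by (simp add: coprime_dvd_mult_right_iff coprime_commute mod_eq_0_iff_dvd)
  then show False using i by (auto dest: dvd_imp_le)
qed

lemma qbinom_primitive_root_eq_0:
  assumes N: "N > 0" and cop: "coprime k N" and j: "0 < j" "j < N"
  shows "qbinom (cis (2 * pi * real k / real N)) N j = 0"
proof -
  let ?z = "cis (2 * pi * real k / real N)"
  have "?z ^ N = 1" using N by (simp add: DeMoivre)
  then have "(\<Prod>i<j. 1 - ?z ^ (N - i)) = 0" using j by (intro prod_zero) (auto intro!: bexI[of _ 0])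
  moreover have "(\<Prod>i\<in>{1..j}. 1 - ?z ^ i) \<noteq> 0"
    using primitive_root_power_neq_1[OF N cop] j by auto
  ultimately show ?thesis using qbinom_mult_prod[of ?z N j] by (metis mult_eq_0_iff)
qed

text \<open>Over \<open>\<complex>\<close> every root of \<open>\<Phi>\<^sub>N\<close> kills \<open>[N choose j]\<^sub>x\<close>, so \<open>\<Phi>\<^sub>N\<close> divides it there,
  hence in \<open>\<int>[x]\<close> since \<open>\<Phi>\<^sub>N\<close> is monic; so the vanishing transfers to every commutative ring.\<close>

lemma qbinom_cyclotomic_root_eq_0:
  fixes q :: "'r::comm_ring_1"
  assumes N: "N > 0" and root: "poly (map_poly of_int (cyclotomic_poly N)) q = 0"
    and j: "0 < j" "j < N"
  shows "qbinom q N j = 0"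
proof -
  let ?S = "{k. k < N \<and> coprime k N}"
  let ?root = "\<lambda>k. cis (2 * pi * real k / real N)"
  have inj: "inj_on ?root ?S"
    using bij_betw_roots_unity[OF N] by (auto simp: bij_betw_def intro: inj_on_subset)
  have "cyclotomic_complex N dvd map_poly of_int (qbinom [:0, 1:] N j)"
    unfolding cyclotomic_complex_def using qbinom_primitive_root_eq_0[OF N _ j]
    by (intro prod_linear_factors_dvd[OF _ inj]) (simp_all add: poly_map_poly_qbinom)
  then obtain S where "map_poly of_int (qbinom [:0, 1:] N j) = map_poly (of_int :: int \<Rightarrow> complex) (cyclotomic_poly N) * S"
    using map_poly_cyclotomic_poly[OF N] by (auto elim: dvdE)
  then obtain h where "qbinom [:0, 1:] N j = cyclotomic_poly N * h"
    using monic_int_poly_quotient_integral[OF lead_coeff_cyclotomic_poly[OF N]] by blast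
  then have "qbinom q N j = poly (map_poly of_int (cyclotomic_poly N)) q * poly (map_poly of_int h) q"
    by (metis poly_map_poly_qbinom map_poly_of_int_mult poly_mult)
  then show ?thesis using root by simp
qed

section \<open>The tensor algebra\<close>

lemma Tcar_smult:
  assumes "p \<in> Tcar N"
  shows "(\<lambda>w. c * p w) \<in> Tcar N"
proof -
  have "{w. c * p w \<noteq> 0} \<subseteq> {w. p w \<noteq> 0}" by auto
  with assms show ?thesis unfolding Tcar_def by (auto intro: finite_subset)
qed

lemma Tcar_diff:
  assumes "p \<in> Tcar N" "r \<in> Tcar N"
  shows "(\<lambda>w. p w - r w) \<in> Tcar N"
proof -
  have "{w. p w - r w \<noteq> 0} \<subseteq> {w. p w \<noteq> 0} \<union> {w. r w \<noteq> 0}" by auto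
  with assms show ?thesis unfolding Tcar_def by (auto intro: finite_subset)
qed

lemma Tcar_tone: "tone \<in> Tcar N"
proof -
  have "{w. (tone :: letter list \<Rightarrow> 'a::comm_ring_1) w \<noteq> 0} = {[]}" by (auto simp: tone_def)
  then show ?thesis by (auto simp: Tcar_def tone_def)
qed

lemma Tcar_tletter:
  assumes "1 \<le> fst c" "snd c \<in> grid N"
  shows "tletter c \<in> Tcar N"
proof -
  have "{w. (tletter c :: letter list \<Rightarrow> 'a::comm_ring_1) w \<noteq> 0} = {[c]}" by (auto simp: tletter_def)
  then show ?thesis using assms by (auto simp: Tcar_def tletter_def)
qed

lemma tmul_nonzero_split:
  assumes "tmul p r w \<noteq> 0"
  obtains i where "p (take i w) \<noteq> 0" "r (drop i w) \<noteq> 0"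
  using assms unfolding tmul_def by (metis (no_types, lifting) mult_zero_left mult_zero_right sum.neutral)

lemma Tcar_tmul:
  assumes p: "p \<in> Tcar N" and r: "r \<in> Tcar N"
  shows "tmul p r \<in> Tcar N"
proof -
  have "{w. tmul p r w \<noteq> 0} \<subseteq> (\<lambda>(x, y). x @ y) ` ({w. p w \<noteq> 0} \<times> {w. r w \<noteq> 0})"
  proof
    fix w assume "w \<in> {w. tmul p r w \<noteq> 0}"
    then obtain i where "p (take i w) \<noteq> 0" "r (drop i w) \<noteq> 0" by (auto elim: tmul_nonzero_split)
    then show "w \<in> (\<lambda>(x, y). x @ y) ` ({w. p w \<noteq> 0} \<times> {w. r w \<noteq> 0})"
      by (intro image_eqI[of _ _ "(take i w, drop i w)"]) auto
  qed
  moreover have "finite ((\<lambda>(x, y). x @ y) ` ({w. p w \<noteq> 0} \<times> {w. r w \<noteq> 0}))"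
    using p r by (simp add: Tcar_def)
  ultimately have "finite {w. tmul p r w \<noteq> 0}" by (rule finite_subset)
  moreover have "\<forall>c\<in>set w. 1 \<le> fst c \<and> snd c \<in> grid N" if nz: "tmul p r w \<noteq> 0" for w
  proof -
    obtain i where i: "p (take i w) \<noteq> 0" "r (drop i w) \<noteq> 0" using nz by (rule tmul_nonzero_split)
    have "set w = set (take i w) \<union> set (drop i w)"
      by (metis append_take_drop_id set_append)
    then show ?thesis using i p r unfolding Tcar_def by blast
  qed
  ultimately show ?thesis by (simp add: Tcar_def)
qed

lemma Tcar_tpow: "p \<in> Tcar N \<Longrightarrow> tpow p n \<in> Tcar N"
  by (induction n) (simp_all add: tpow_def Tcar_tone Tcar_tmul)

lemma tmul_tone: "tmul p tone w = p w"
  unfolding tmul_def tone_def by (simp add: if_distrib[of "\<lambda>t. _ * t"] cong: if_cong)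

lemma tmul_zero_right: "tmul p (\<lambda>_. 0) w = 0"
  unfolding tmul_def by simp

section \<open>The algebra B\<close>

lemma finite_grid [simp]: "finite (grid N)"
  by (simp add: grid_def)

lemma mem_grid_iff: "x \<in> grid N \<longleftrightarrow> fst x < N \<and> snd x < N"
  by (cases x) (simp add: grid_def)

lemma sum_eq_single:
  "finite A \<Longrightarrow> x \<in> A \<Longrightarrow> \<forall>y\<in>A. y \<noteq> x \<longrightarrow> g y = 0 \<Longrightarrow> sum g A = g x"
  by (subst sum.remove[of A x]) (auto intro!: sum.neutral)

lemma sum_eq_two:
  assumes "finite A" "x1 \<in> A" "x2 \<in> A" "x1 \<noteq> x2" "\<forall>y\<in>A. y \<noteq> x1 \<and> y \<noteq> x2 \<longrightarrow> g y = 0"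
  shows "sum g A = g x1 + g x2"
proof -
  have "sum g A = sum g {x1, x2}" using assms by (intro sum.mono_neutral_right) auto
  then show ?thesis using assms by simp
qed

definition bmul_kernel :: "nat \<Rightarrow> 'r::comm_ring_1 \<Rightarrow> 'r \<Rightarrow> 'r \<Rightarrow> nat \<times> nat \<Rightarrow> nat \<times> nat \<Rightarrow> nat \<times> nat \<Rightarrow> 'r" where
  "bmul_kernel N q u a i j p = (if ((fst i + fst j) mod N, (snd i + snd j) mod N) = p
     then q ^ (snd i * fst j) * u ^ ((fst i + fst j) div N) * a ^ ((snd i + snd j) div N) else 0)"

lemma bmul_eq_kernel_sum: "bmul N q u a b c p = (\<Sum>i\<in>grid N. \<Sum>j\<in>grid N. b i * c j * bmul_kernel N q u a i j p)"
  unfolding bmul_def bmul_kernel_def by (auto simp: mult_ac intro!: sum.cong)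

lemma sum_hbasis_mult: "finite A \<Longrightarrow> i \<in> A \<Longrightarrow> (\<Sum>x\<in>A. hbasis i x * F x) = (F i :: 'a::comm_ring_1)"
  by (simp add: hbasis_def if_distrib[of "\<lambda>t. t * _"] cong: if_cong)

lemma sum_mult_hbasis: "finite A \<Longrightarrow> i \<in> A \<Longrightarrow> (\<Sum>x\<in>A. F x * hbasis i x) = (F i :: 'a::comm_ring_1)"
  using sum_hbasis_mult[of A i F] by (simp add: mult.commute)

lemma bmul_cong:
  "(\<forall>z\<in>grid N. b z = b' z) \<Longrightarrow> (\<forall>z\<in>grid N. c z = c' z) \<Longrightarrow> bmul N q u a b c p = bmul N q u a b' c' p"
  unfolding bmul_eq_kernel_sum by (auto intro!: sum.cong)

lemma bmul_add_left: "bmul N q u a (\<lambda>z. b z + b' z) c p = bmul N q u a b c p + bmul N q u a b' c p"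
  unfolding bmul_eq_kernel_sum by (simp add: sum.distrib algebra_simps)

lemma bmul_add_right: "bmul N q u a b (\<lambda>z. c z + c' z) p = bmul N q u a b c p + bmul N q u a b c' p"
  unfolding bmul_eq_kernel_sum by (simp add: sum.distrib algebra_simps)

lemma bmul_smult_left: "bmul N q u a (\<lambda>z. s * b z) c p = s * bmul N q u a b c p"
  unfolding bmul_eq_kernel_sum by (simp add: sum_distrib_left algebra_simps)

lemma bmul_smult_right: "bmul N q u a b (\<lambda>z. s * c z) p = s * bmul N q u a b c p"
  unfolding bmul_eq_kernel_sum by (simp add: sum_distrib_left algebra_simps)

lemma bmul_sum_right: "bmul N q u a b (\<lambda>z. \<Sum>s\<in>S. Y s z) p = (\<Sum>s\<in>S. bmul N q u a b (Y s) p)"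
proof -
  have "bmul N q u a b (\<lambda>z. \<Sum>s\<in>S. Y s z) p = (\<Sum>i\<in>grid N. \<Sum>j\<in>grid N. \<Sum>s\<in>S. b i * Y s j * bmul_kernel N q u a i j p)"
    unfolding bmul_eq_kernel_sum by (simp add: sum_distrib_left sum_distrib_right mult_ac)
  also have "\<dots> = (\<Sum>s\<in>S. \<Sum>i\<in>grid N. \<Sum>j\<in>grid N. b i * Y s j * bmul_kernel N q u a i j p)"
    by (subst sum.swap) (simp add: sum.swap[of _ _ S])
  finally show ?thesis unfolding bmul_eq_kernel_sum .
qed

lemma bmul_eq_0_left: "\<forall>z\<in>grid N. b z = 0 \<Longrightarrow> bmul N q u a b c p = 0"
  unfolding bmul_eq_kernel_sum by simp

lemma bmul_eq_0_right: "\<forall>z\<in>grid N. c z = 0 \<Longrightarrow> bmul N q u a b c p = 0"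
  unfolding bmul_eq_kernel_sum by simp

lemma bmul_zero_left [simp]: "bmul N q u a (\<lambda>_. 0) c p = 0"
  by (simp add: bmul_eq_0_left)

text \<open>\<open>bmono N u a m j\<close> is the monomial \<open>v\<^sub>g\<^sup>m v\<^sub>x\<^sup>j\<close> of B, for arbitrary exponents.\<close>

definition bmono :: "nat \<Rightarrow> 'r::comm_ring_1 \<Rightarrow> 'r \<Rightarrow> nat \<Rightarrow> nat \<Rightarrow> nat \<times> nat \<Rightarrow> 'r" where
  "bmono N u a m j = (\<lambda>z. u ^ (m div N) * a ^ (j div N) * hbasis (m mod N, j mod N) z)"

lemma mod_mod_in_grid: "N > 0 \<Longrightarrow> (m mod N, j mod N) \<in> grid N"
  by (simp add: grid_def)

lemma bmono_mult:
  assumes N: "N > 0"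
  shows "bmul N q u a (bmono N u a m j) (bmono N u a m' j') p = q ^ ((j mod N) * (m' mod N)) * bmono N u a (m + m') (j + j') p"
proof -
  have "bmul N q u a (bmono N u a m j) (bmono N u a m' j') p =
     (\<Sum>i\<in>grid N. hbasis (m mod N, j mod N) i * (\<Sum>k\<in>grid N. hbasis (m' mod N, j' mod N) k *
        (u ^ (m div N) * a ^ (j div N) * (u ^ (m' div N) * a ^ (j' div N)) * bmul_kernel N q u a i k p)))"
    unfolding bmul_eq_kernel_sum bmono_def by (simp add: sum_distrib_left mult_ac)
  also have "\<dots> = u ^ (m div N) * a ^ (j div N) * (u ^ (m' div N) * a ^ (j' div N)) *
        bmul_kernel N q u a (m mod N, j mod N) (m' mod N, j' mod N) p"
    using N by (simp add: sum_hbasis_mult mod_mod_in_grid)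
  also have "\<dots> = q ^ ((j mod N) * (m' mod N)) * bmono N u a (m + m') (j + j') p"
  proof -
    have "(m + m') div N = m div N + m' div N + (m mod N + m' mod N) div N"
      and "(j + j') div N = j div N + j' div N + (j mod N + j' mod N) div N"
      by (rule div_add1_eq)+
    moreover have "(m mod N + m' mod N) mod N = (m + m') mod N"
      and "(j mod N + j' mod N) mod N = (j + j') mod N"
      by (simp_all add: mod_add_eq)
    ultimately show ?thesis unfolding bmul_kernel_def bmono_def hbasis_def
      by (auto simp: power_add mult_ac)
  qed
  finally show ?thesis .
qed

lemma bmono_0_0: "N > 0 \<Longrightarrow> bmono N u a 0 0 = hbasis (0, 0)"
  by (auto simp: bmono_def)

lemma bmul_hbasis_left:
  assumes "i0 \<in> grid N"
  shows "bmul N q u a (hbasis i0) c y = (\<Sum>j\<in>grid N. c j * bmul_kernel N q u a i0 j y)"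
proof -
  have "bmul N q u a (hbasis i0) c y =
      (\<Sum>i\<in>grid N. hbasis i0 i * (\<Sum>j\<in>grid N. c j * bmul_kernel N q u a i j y))"
    unfolding bmul_eq_kernel_sum by (simp add: sum_distrib_left mult_ac)
  then show ?thesis using assms by (simp add: sum_hbasis_mult)
qed

lemma bmul_hbasis_left_nonzero:
  assumes "bmul N q u a (hbasis i0) c y \<noteq> 0" "i0 \<in> grid N"
  obtains j where "j \<in> grid N" "c j \<noteq> 0" "bmul_kernel N q u a i0 j y \<noteq> 0"
proof -
  have "(\<Sum>j\<in>grid N. c j * bmul_kernel N q u a i0 j y) \<noteq> 0"
    using assms by (simp add: bmul_hbasis_left)
  then obtain j where "j \<in> grid N" "c j * bmul_kernel N q u a i0 j y \<noteq> 0"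
    by (rule sum.not_neutral_contains_not_neutral)
  then show ?thesis by (auto intro: that)
qed

lemma bmul_one_left:
  assumes y: "y \<in> grid N"
  shows "bmul N q u a (hbasis (0, 0)) b y = b y"
proof -
  have "bmul N q u a (hbasis (0, 0)) b y = (\<Sum>j\<in>grid N. b j * bmul_kernel N q u a (0, 0) j y)"
    using y by (intro bmul_hbasis_left) (auto simp: grid_def)
  also have "\<dots> = (\<Sum>j\<in>grid N. b j * hbasis y j)"
    by (rule sum.cong) (auto simp: bmul_kernel_def hbasis_def grid_def)
  also have "\<dots> = b y" using y by (simp add: sum_mult_hbasis)
  finally show ?thesis .
qed

fun bpow :: "nat \<Rightarrow> 'r::comm_ring_1 \<Rightarrow> 'r \<Rightarrow> 'r \<Rightarrow> (nat \<times> nat \<Rightarrow> 'r) \<Rightarrow> nat \<Rightarrow> nat \<times> nat \<Rightarrow> 'r" where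
  "bpow N q u a b 0 = hbasis (0, 0)"
| "bpow N q u a b (Suc n) = bmul N q u a b (bpow N q u a b n)"

lemma bpow_cong: "\<forall>z\<in>grid N. b z = b' z \<Longrightarrow> bpow N q u a b n y = bpow N q u a b' n y"
proof (induction n arbitrary: y)
  case 0 then show ?case by simp
next
  case (Suc n)
  then show ?case by (simp add: bmul_cong[of N b b'])
qed

lemma bpow_smult_bmono:
  assumes N: "N > 0"
  shows "bpow N q u a (\<lambda>z. s * bmono N u a m 0 z) n p = s ^ n * bmono N u a (m * n) 0 p"
proof (induction n arbitrary: p)
  case 0 then show ?case using N by (simp add: bmono_0_0)
next
  case (Suc n)
  have "bpow N q u a (\<lambda>z. s * bmono N u a m 0 z) n = (\<lambda>z. s ^ n * bmono N u a (m * n) 0 z)"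
    using Suc.IH by auto
  then show ?case using N by (simp add: bmul_smult_left bmul_smult_right bmono_mult algebra_simps)
qed

lemma bmul_qcomm_vx_vg:
  assumes "2 \<le> N"
  shows "bmul N q u a (\<lambda>z. e * bmono N u a 0 1 z + d * bmono N u a 1 0 z) (\<lambda>z. c * bmono N u a 1 0 z) p
      - q * bmul N q u a (\<lambda>z. c * bmono N u a 1 0 z) (\<lambda>z. e * bmono N u a 0 1 z + d * bmono N u a 1 0 z) p
    = d * c * (1 - q) * bmono N u a 2 0 p"
proof -
  have "N > 0" "Suc 0 mod N = Suc 0" using assms by simp_all
  then show ?thesis
    by (simp add: bmul_add_left bmul_add_right bmul_smult_left bmul_smult_right bmono_mult
        numeral_2_eq_2 algebra_simps)
qed

definition qbinom_expansion :: "nat \<Rightarrow> 'r::comm_ring_1 \<Rightarrow> 'r \<Rightarrow> 'r \<Rightarrow> 'r \<Rightarrow> 'r \<Rightarrow> nat \<Rightarrow> nat \<times> nat \<Rightarrow> 'r" where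
  "qbinom_expansion N q u a e d n = (\<lambda>z. \<Sum>j\<le>n. qbinom q n j * e ^ j * d ^ (n - j) * bmono N u a (n - j) j z)"

lemma qbinom_pascal_sum:
  "(\<Sum>j\<le>n. q ^ (n - j) * qbinom q n j * t (Suc j)) + (\<Sum>j\<le>n. qbinom q n j * t j) =
    (\<Sum>j\<le>Suc n. qbinom q (Suc n) j * t j)"
proof -
  have "(\<Sum>j\<le>n. qbinom q n j * t j) = (\<Sum>j\<le>Suc n. qbinom q n j * t j)"
    by (simp add: qbinom_eq_0)
  also have "\<dots> = t 0 + (\<Sum>j\<le>n. qbinom q n (Suc j) * t (Suc j))"
    by (simp only: sum.atMost_Suc_shift) simp
  finally show ?thesis
    by (simp only: sum.atMost_Suc_shift) (simp add: sum.distrib algebra_simps)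
qed

lemma bmul_qbinom_expansion:
  assumes N: "2 \<le> N" and n: "n < N"
  shows "bmul N q u a (\<lambda>z. e * bmono N u a 0 1 z + d * bmono N u a 1 0 z) (qbinom_expansion N q u a e d n) p =
    qbinom_expansion N q u a e d (Suc n) p"
proof -
  define t where "t j = e ^ j * d ^ (Suc n - j) * bmono N u a (Suc n - j) j p" for j
  have mod_N: "1 mod N = 1" "(n - j) mod N = n - j" for j using N n by simp_all
  have "e * bmul N q u a (bmono N u a 0 1) (qbinom_expansion N q u a e d n) p =
      (\<Sum>j\<le>n. q ^ (n - j) * qbinom q n j * t (Suc j))"
    unfolding qbinom_expansion_def t_def using N
    by (simp add: bmul_sum_right bmul_smult_right bmono_mult mod_N sum_distrib_left mult_ac)
  moreover have "d * bmul N q u a (bmono N u a 1 0) (qbinom_expansion N q u a e d n) p =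
      (\<Sum>j\<le>n. qbinom q n j * t j)"
    unfolding qbinom_expansion_def t_def using N
    by (auto simp: bmul_sum_right bmul_smult_right bmono_mult sum_distrib_left Suc_diff_le mult_ac
        intro!: sum.cong)
  ultimately have "bmul N q u a (\<lambda>z. e * bmono N u a 0 1 z + d * bmono N u a 1 0 z) (qbinom_expansion N q u a e d n) p =
      (\<Sum>j\<le>Suc n. qbinom q (Suc n) j * t j)"
    by (simp only: bmul_add_left bmul_smult_left qbinom_pascal_sum)
  then show ?thesis
    unfolding qbinom_expansion_def t_def by (simp add: mult_ac)
qed

lemma qbinom_expansion_N:
  assumes N: "2 \<le> N" and vanish: "\<forall>j. 0 < j \<and> j < N \<longrightarrow> qbinom q N j = 0"
  shows "qbinom_expansion N q u a e d N p = (d ^ N * u + e ^ N * a) * hbasis (0, 0) p"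
proof -
  have "qbinom_expansion N q u a e d N p =
      qbinom q N 0 * e ^ 0 * d ^ (N - 0) * bmono N u a (N - 0) 0 p + qbinom q N N * e ^ N * d ^ (N - N) * bmono N u a (N - N) N p"
    unfolding qbinom_expansion_def using N vanish by (intro sum_eq_two) auto
  then show ?thesis using N by (simp add: bmono_def algebra_simps)
qed

lemma bpow_eq_qbinom_expansion:
  assumes N: "2 \<le> N" and xi: "\<forall>z\<in>grid N. xi z = e * bmono N u a 0 1 z + d * bmono N u a 1 0 z"
  shows "n \<le> N \<Longrightarrow> y \<in> grid N \<Longrightarrow> bpow N q u a xi n y = qbinom_expansion N q u a e d n y"
proof (induction n arbitrary: y)
  case 0
  then show ?case using N by (simp add: qbinom_expansion_def bmono_0_0)
next
  case (Suc n)
  then have "bpow N q u a xi (Suc n) y = bmul N q u a (\<lambda>z. e * bmono N u a 0 1 z + d * bmono N u a 1 0 z) (qbinom_expansion N q u a e d n) y"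
    using xi by (simp add: bmul_cong[of N xi _ "bpow N q u a xi n"])
  also have "\<dots> = qbinom_expansion N q u a e d (Suc n) y" using Suc.prems N by (intro bmul_qbinom_expansion) auto
  finally show ?case .
qed

section \<open>Tensor products and coactions\<close>

lemma tens_mul_left_single:
  assumes "k0 \<in> grid N" "\<forall>k\<in>grid N. k \<noteq> k0 \<longrightarrow> (\<forall>l. mul (F k) (G l) y = 0)"
  shows "tens_mul N q mul F G p y = (\<Sum>l\<in>grid N. if ((fst k0 + fst l) mod N, snd k0 + snd l) = p
      then q ^ (snd k0 * fst l) * mul (F k0) (G l) y else 0)"
  unfolding tens_mul_def by (rule sum_eq_single) (use assms in \<open>auto intro!: sum.neutral\<close>)

lemma tens_mul_left_two:
  assumes "k1 \<in> grid N" "k2 \<in> grid N" "k1 \<noteq> k2" "\<forall>k\<in>grid N. k \<noteq> k1 \<and> k \<noteq> k2 \<longrightarrow> (\<forall>l. mul (F k) (G l) y = 0)"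
  shows "tens_mul N q mul F G p y = (\<Sum>l\<in>grid N. if ((fst k1 + fst l) mod N, snd k1 + snd l) = p
      then q ^ (snd k1 * fst l) * mul (F k1) (G l) y else 0) +
    (\<Sum>l\<in>grid N. if ((fst k2 + fst l) mod N, snd k2 + snd l) = p
      then q ^ (snd k2 * fst l) * mul (F k2) (G l) y else 0)"
  unfolding tens_mul_def by (rule sum_eq_two) (use assms in \<open>auto intro!: sum.neutral\<close>)

lemma tens_right_unit:
  assumes one: "\<forall>b. mul b one y = b y" and zero: "\<forall>b. mul b (\<lambda>_. 0) y = 0" and p: "p \<in> grid N"
  shows "tens_mul N q mul F (tens_one one) p y = F p y"
proof -
  have "tens_mul N q mul F (tens_one one) p y = (\<Sum>k\<in>grid N. if k = p then F k y else 0)"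
    unfolding tens_mul_def
  proof (rule sum.cong[OF refl])
    fix k assume k: "k \<in> grid N"
    have "(\<Sum>l\<in>grid N. if ((fst k + fst l) mod N, snd k + snd l) = p
        then q ^ (snd k * fst l) * mul (F k) (tens_one one l) y else 0) =
        (if (fst k mod N, snd k) = p then mul (F k) one y else 0)"
      using p by (subst sum_eq_single[of _ "(0, 0)"]) (auto simp: tens_one_def zero grid_def)
    then show "(\<Sum>l\<in>grid N. if ((fst k + fst l) mod N, snd k + snd l) = p
        then q ^ (snd k * fst l) * mul (F k) (tens_one one l) y else 0) = (if k = p then F k y else 0)"
      using k by (auto simp: one grid_def)
  qed
  then show ?thesis using p by simp
qed

lemma tens_left_unit:
  assumes "\<forall>b. mul one b y = b y" "\<forall>b. mul (\<lambda>_. 0) b y = 0" "p \<in> grid N"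
  shows "tens_mul N q mul (tens_one one) F p y = F p y"
proof -
  have "tens_mul N q mul (tens_one one) F p y =
     (\<Sum>l\<in>grid N. if ((fst (0::nat,0::nat) + fst l) mod N, snd (0::nat,0::nat) + snd l) = p
        then q ^ (snd (0::nat,0::nat) * fst l) * mul (tens_one one (0,0)) (F l) y else 0)"
    unfolding tens_mul_def
    by (rule sum_eq_single) (use assms(3) in \<open>auto simp: tens_one_def grid_def assms(2) intro!: sum.neutral\<close>)
  also have "\<dots> = (\<Sum>l\<in>grid N. if l = p then F l y else 0)"
    by (rule sum.cong[OF refl]) (auto simp: tens_one_def assms(1) grid_def)
  also have "\<dots> = F p y" using assms(3) by simp
  finally show ?thesis .
qed

lemma tens_pow_0: "tens_pow N q mul one F 0 = tens_one one"
  by (simp add: tens_pow_def)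

lemma tens_pow_Suc: "tens_pow N q mul one F (Suc n) = tens_mul N q mul F (tens_pow N q mul one F n)"
  by (simp add: tens_pow_def)

definition hmul_kernel :: "nat \<Rightarrow> 'r::comm_ring_1 \<Rightarrow> nat \<times> nat \<Rightarrow> nat \<times> nat \<Rightarrow> nat \<times> nat \<Rightarrow> 'r" where
  "hmul_kernel N q i j p = (if ((fst i + fst j) mod N, snd i + snd j) = p then q ^ (snd i * fst j) else 0)"

lemma hmul_eq_kernel_sum: "hmul N q b c p = (\<Sum>i\<in>grid N. \<Sum>j\<in>grid N. b i * c j * hmul_kernel N q i j p)"
  unfolding hmul_def hmul_kernel_def by (auto simp: mult_ac intro!: sum.cong)

lemma hmul_one_right:
  assumes y: "y \<in> grid N"
  shows "hmul N q b (hbasis (0, 0)) y = b y"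
proof -
  have N: "N > 0" using y by (auto simp: grid_def)
  have "hmul N q b (hbasis (0, 0)) y = (\<Sum>i\<in>grid N. b i * (\<Sum>j\<in>grid N. hbasis (0, 0) j * hmul_kernel N q i j y))"
    unfolding hmul_eq_kernel_sum by (simp add: sum_distrib_left mult_ac)
  also have "\<dots> = (\<Sum>i\<in>grid N. b i * hmul_kernel N q i (0, 0) y)" using N by (simp add: sum_hbasis_mult grid_def)
  also have "\<dots> = (\<Sum>i\<in>grid N. b i * hbasis y i)"
    by (rule sum.cong) (auto simp: hmul_kernel_def hbasis_def grid_def)
  also have "\<dots> = b y" using y by (simp add: sum_mult_hbasis)
  finally show ?thesis .
qed

lemma hmul_one_left:
  assumes y: "y \<in> grid N"
  shows "hmul N q (hbasis (0, 0)) b y = b y"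
proof -
  have N: "N > 0" using y by (auto simp: grid_def)
  have "hmul N q (hbasis (0, 0)) b y = (\<Sum>i\<in>grid N. hbasis (0, 0) i * (\<Sum>j\<in>grid N. b j * hmul_kernel N q i j y))"
    unfolding hmul_eq_kernel_sum by (simp add: sum_distrib_left mult_ac)
  also have "\<dots> = (\<Sum>j\<in>grid N. b j * hmul_kernel N q (0, 0) j y)" using N by (simp add: sum_hbasis_mult grid_def)
  also have "\<dots> = (\<Sum>j\<in>grid N. b j * hbasis y j)"
    by (rule sum.cong) (auto simp: hmul_kernel_def hbasis_def grid_def)
  also have "\<dots> = b y" using y by (simp add: sum_mult_hbasis)
  finally show ?thesis .
qed

lemma hmul_zero_left: "hmul N q (\<lambda>_. 0) c p = 0"
  unfolding hmul_eq_kernel_sum by simp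

lemma hmul_zero_right: "hmul N q b (\<lambda>_. 0) p = 0"
  unfolding hmul_eq_kernel_sum by simp

lemma comult_one: "l \<in> grid N \<Longrightarrow> j \<in> grid N \<Longrightarrow> comult N q (0, 0) l j = (if l = (0, 0) then hbasis (0, 0) j else 0)"
  unfolding comult_def
  by (simp add: tens_pow_0 tens_left_unit hmul_one_left hmul_zero_left, simp add: tens_one_def)

lemma comult_g:
  "l \<in> grid N \<Longrightarrow> j \<in> grid N \<Longrightarrow> comult N q (1, 0) l j = (if l = (1, 0) then hbasis (1, 0) j else 0)"
  unfolding comult_def
  by (simp add: tens_pow_0 tens_pow_Suc tens_right_unit hmul_one_right hmul_zero_right, simp add: gen_g_def)

lemma comult_x:
  "l \<in> grid N \<Longrightarrow> j \<in> grid N \<Longrightarrow> comult N q (0, 1) l j =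
    (if l = (0, 1) then hbasis (0, 0) j else if l = (1, 0) then hbasis (0, 1) j else 0)"
  unfolding comult_def
  by (simp add: tens_pow_0 tens_pow_Suc tens_right_unit tens_left_unit hmul_one_right hmul_zero_right
      hmul_one_left hmul_zero_left, simp add: gen_x_def)

lemma tens_mul_gen_g:
  assumes N: "2 \<le> N"
  shows "tens_mul N q (bmul N q u a) gen_g G p y =
    (\<Sum>l\<in>grid N. if (Suc (fst l) mod N, snd l) = p then bmul N q u a (hbasis (1, 0)) (G l) y else 0)"
  by (subst tens_mul_left_single[of "(1, 0)"]) (use N in \<open>auto simp: mem_grid_iff gen_g_def bmul_zero_left cong: if_cong\<close>)

lemma tens_mul_gen_x:
  assumes N: "2 \<le> N"
  shows "tens_mul N q (bmul N q u a) gen_x G p y =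
    (\<Sum>l\<in>grid N. if (fst l mod N, Suc (snd l)) = p then q ^ fst l * bmul N q u a (hbasis (0, 0)) (G l) y else 0) +
    (\<Sum>l\<in>grid N. if (Suc (fst l) mod N, snd l) = p then bmul N q u a (hbasis (0, 1)) (G l) y else 0)"
  by (subst tens_mul_left_two[of "(0, 1)" _ "(1, 0)"]) (use N in \<open>auto simp: mem_grid_iff gen_x_def bmul_zero_left cong: if_cong\<close>)

abbreviation vg_coact_pow :: "nat \<Rightarrow> 'r::comm_ring_1 \<Rightarrow> 'r \<Rightarrow> 'r \<Rightarrow> nat \<Rightarrow> nat \<times> nat \<Rightarrow> nat \<times> nat \<Rightarrow> 'r" where
  "vg_coact_pow N q u a m \<equiv> tens_pow N q (bmul N q u a) (hbasis (0, 0)) gen_g m"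

abbreviation vx_coact_pow :: "nat \<Rightarrow> 'r::comm_ring_1 \<Rightarrow> 'r \<Rightarrow> 'r \<Rightarrow> nat \<Rightarrow> nat \<times> nat \<Rightarrow> nat \<times> nat \<Rightarrow> 'r" where
  "vx_coact_pow N q u a n \<equiv> tens_pow N q (bmul N q u a) (hbasis (0, 0)) gen_x n"

lemma vg_coact_pow_eq:
  assumes N: "2 \<le> N"
  shows "m < N \<Longrightarrow> l \<in> grid N \<Longrightarrow>
    \<forall>z\<in>grid N. vg_coact_pow N q u a m l z = (if l = (m, 0) then hbasis (m, 0) z else 0)"
proof (induction m arbitrary: l)
  case 0
  then show ?case by (simp add: tens_pow_0 tens_one_def)
next
  case (Suc m)
  have N0: "N > 0" using N by simp
  have m: "m < N" using Suc.prems by simp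
  have mg: "(m, 0) \<in> grid N" using m N0 by (simp add: grid_def)
  show ?case
  proof
    fix z assume z: "z \<in> grid N"
    have "bmul N q u a (hbasis (1, 0)) (vg_coact_pow N q u a m l') z = 0" if "l' \<in> grid N" "l' \<noteq> (m, 0)" for l'
      using Suc.IH[OF m that(1)] that(2) by (intro bmul_eq_0_right) simp
    then have "vg_coact_pow N q u a (Suc m) l z =
        (if (Suc m mod N, 0) = l then bmul N q u a (hbasis (1, 0)) (vg_coact_pow N q u a m (m, 0)) z else 0)"
      unfolding tens_pow_Suc tens_mul_gen_g[OF N]
      by (subst sum_eq_single[of _ "(m, 0)"]) (use mg in auto)
    also have "bmul N q u a (hbasis (1, 0)) (vg_coact_pow N q u a m (m, 0)) z = bmul N q u a (bmono N u a 1 0) (bmono N u a m 0) z"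
      using Suc.IH[OF m mg] N m by (intro bmul_cong) (auto simp: bmono_def)
    also have "\<dots> = hbasis (Suc m, 0) z"
      using Suc.prems N0 by (simp only: bmono_mult[OF N0]) (simp add: bmono_def)
    finally show "vg_coact_pow N q u a (Suc m) l z = (if l = (Suc m, 0) then hbasis (Suc m, 0) z else 0)"
      using Suc.prems by auto
  qed
qed

lemma vx_coact_pow_support:
  assumes N: "2 \<le> N"
  shows "n < N \<Longrightarrow> b \<in> grid N \<Longrightarrow> j \<in> grid N \<Longrightarrow> vx_coact_pow N q u a n b j \<noteq> 0 \<Longrightarrow>
    fst j = 0 \<and> snd j + snd b = n \<and> fst b = snd j"
proof (induction n arbitrary: b j)
  case 0
  then show ?case by (auto simp: tens_pow_0 tens_one_def hbasis_def split: if_splits)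
next
  case (Suc n)
  have n: "n < N" using Suc.prems by simp
  let ?right = "\<lambda>l. if (fst l mod N, Suc (snd l)) = b
    then q ^ fst l * bmul N q u a (hbasis (0, 0)) (vx_coact_pow N q u a n l) j else 0"
  let ?left = "\<lambda>l. if (Suc (fst l) mod N, snd l) = b
    then bmul N q u a (hbasis (0, 1)) (vx_coact_pow N q u a n l) j else 0"
  have "sum ?right (grid N) + sum ?left (grid N) \<noteq> 0"
    using Suc.prems(4) unfolding tens_pow_Suc tens_mul_gen_x[OF N] .
  then have "sum ?right (grid N) \<noteq> 0 \<or> sum ?left (grid N) \<noteq> 0" by auto
  then consider (right) l where "l \<in> grid N" "?right l \<noteq> 0" | (left) l where "l \<in> grid N" "?left l \<noteq> 0"
    by (elim disjE sum.not_neutral_contains_not_neutral) blast+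
  then show ?case
  proof cases
    case (right l)
    then have "(fst l mod N, Suc (snd l)) = b" "vx_coact_pow N q u a n l j \<noteq> 0"
      by (auto simp: bmul_one_left[OF Suc.prems(3)] split: if_splits)
    then show ?thesis using Suc.IH[OF n right(1) Suc.prems(3)] right(1) by (auto simp: mem_grid_iff)
  next
    case (left l)
    then have b: "(Suc (fst l) mod N, snd l) = b"
      and "bmul N q u a (hbasis (0, 1)) (vx_coact_pow N q u a n l) j \<noteq> 0"
      by (auto split: if_splits)
    then obtain i where i: "i \<in> grid N" "vx_coact_pow N q u a n l i \<noteq> 0" "bmul_kernel N q u a (0, 1) i j \<noteq> 0"
      using N by (elim bmul_hbasis_left_nonzero) (simp add: mem_grid_iff)
    then show ?thesis
      using Suc.IH[OF n left(1) i(1,2)] b Suc.prems(1)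
      by (auto simp: bmul_kernel_def split: if_splits)
  qed
qed

lemma vx_coact_pow_top:
  assumes N: "2 \<le> N"
  shows "n < N \<Longrightarrow> vx_coact_pow N q u a n (0, n) (0, 0) = 1"
proof (induction n)
  case 0
  then show ?case by (simp add: tens_pow_0 tens_one_def hbasis_def)
next
  case (Suc n)
  have n: "n < N" using Suc.prems by simp
  have "(\<Sum>l\<in>grid N. if (fst l mod N, Suc (snd l)) = (0, Suc n)
      then q ^ fst l * bmul N q u a (hbasis (0, 0)) (vx_coact_pow N q u a n l) (0, 0) else 0) = 1"
    using Suc.IH[OF n] N n
    by (subst sum_eq_single[of _ "(0, n)"]) (auto simp: mem_grid_iff bmul_one_left)
  moreover have "bmul N q u a (hbasis (0, 1)) (vx_coact_pow N q u a n l) (0, 0) = 0"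
    if "l \<in> grid N" "snd l = Suc n" for l
    using vx_coact_pow_support[OF N n that(1)] that(2) by (intro bmul_eq_0_right) fastforce
  ultimately show ?case
    unfolding tens_pow_Suc tens_mul_gen_x[OF N] by (auto intro!: sum.neutral)
qed

lemma tens_mul_vg_coact_pow:
  assumes N: "2 \<le> N" and m: "m < N" and y: "y \<in> grid N"
  shows "tens_mul N q (bmul N q u a) (vg_coact_pow N q u a m) G p y =
    (\<Sum>l\<in>grid N. if ((m + fst l) mod N, snd l) = p then bmul N q u a (hbasis (m, 0)) (G l) y else 0)"
proof -
  have mg: "(m, 0) \<in> grid N" using m N by (simp add: mem_grid_iff)
  have zero: "bmul N q u a (vg_coact_pow N q u a m k) Y y = 0" if "k \<in> grid N" "k \<noteq> (m, 0)" for k Y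
    using vg_coact_pow_eq[OF N m that(1)] that(2) by (intro bmul_eq_0_left) simp
  have one: "bmul N q u a (vg_coact_pow N q u a m (m, 0)) Y y = bmul N q u a (hbasis (m, 0)) Y y" for Y
    using vg_coact_pow_eq[OF N m mg] by (intro bmul_cong) auto
  show ?thesis
    using mg zero by (subst tens_mul_left_single[of "(m, 0)"]) (auto simp: one cong: if_cong)
qed

lemma bmul_hbasis_vx_coact_pow:
  assumes N: "2 \<le> N" and m: "m < N" "m' < N" and n: "n < N" and l: "l \<in> grid N"
  shows "bmul N q u a (hbasis (m, 0)) (vx_coact_pow N q u a n l) (m', 0) = (if l = (0, n) \<and> m = m' then 1 else 0)"
proof -
  have "bmul N q u a (hbasis (m, 0)) (vx_coact_pow N q u a n l) (m', 0) =
      (\<Sum>j\<in>grid N. vx_coact_pow N q u a n l j * bmul_kernel N q u a (m, 0) j (m', 0))"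
    using m N by (intro bmul_hbasis_left) (simp add: mem_grid_iff)
  also have "\<dots> = vx_coact_pow N q u a n l (0, 0) * bmul_kernel N q u a (m, 0) (0, 0) (m', 0)"
  proof (rule sum_eq_single)
    show "\<forall>j\<in>grid N. j \<noteq> (0, 0) \<longrightarrow> vx_coact_pow N q u a n l j * bmul_kernel N q u a (m, 0) j (m', 0) = 0"
    proof (intro ballI impI)
      fix j assume j: "j \<in> grid N" "j \<noteq> (0, 0)"
      show "vx_coact_pow N q u a n l j * bmul_kernel N q u a (m, 0) j (m', 0) = 0"
      proof (cases "vx_coact_pow N q u a n l j = 0")
        case False
        then have "fst j = 0" using vx_coact_pow_support[OF N n l j(1)] by blast
        then have "snd j mod N \<noteq> 0" using j by (cases j) (simp add: mem_grid_iff)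
        then show ?thesis by (simp add: bmul_kernel_def)
      qed simp
    qed
  qed (use N in \<open>simp_all add: mem_grid_iff\<close>)
  also have "\<dots> = (if l = (0, n) \<and> m = m' then 1 else 0)"
  proof -
    have "vx_coact_pow N q u a n l (0, 0) = (if l = (0, n) then 1 else 0)"
      using vx_coact_pow_support[OF N n l, of "(0, 0)"] vx_coact_pow_top[OF N n] N
      by (cases l) (auto simp: mem_grid_iff)
    then show ?thesis using m by (simp add: bmul_kernel_def)
  qed
  finally show ?thesis .
qed

text \<open>In \<open>\<delta>(v\<^sub>g\<^sup>m v\<^sub>x\<^sup>n)\<close> the only term whose left factor involves no \<open>v\<^sub>x\<close> is
  \<open>v\<^sub>g\<^sup>m \<otimes> g\<^sup>m x\<^sup>n\<close>; so a coefficient of \<open>b \<in> B\<close> can be read off from \<open>\<delta>(b)\<close>.\<close>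

lemma bcoact_basis_diag:
  assumes N: "2 \<le> N" and k: "k \<in> grid N" and k0: "k0 \<in> grid N"
  shows "bcoact_basis N q u a k k0 (fst k0, 0) = (if k = k0 then 1 else 0)"
proof -
  obtain m n where kmn: "k = (m, n)" by (cases k)
  obtain m0 n0 where k0mn: "k0 = (m0, n0)" by (cases k0)
  have m: "m < N" and n: "n < N" and m0: "m0 < N" using k k0 kmn k0mn by (auto simp: mem_grid_iff)
  have "bcoact_basis N q u a k k0 (fst k0, 0) = (\<Sum>l\<in>grid N. if ((m + fst l) mod N, snd l) = k0
      then bmul N q u a (hbasis (m, 0)) (vx_coact_pow N q u a n l) (m0, 0) else 0)"
    unfolding bcoact_basis_def kmn k0mn fst_conv snd_conv
    using N m0 by (intro tens_mul_vg_coact_pow[OF N m]) (simp add: mem_grid_iff)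
  also have "\<dots> = (if ((m + fst (0::nat, n)) mod N, snd (0::nat, n)) = k0
      then bmul N q u a (hbasis (m, 0)) (vx_coact_pow N q u a n (0, n)) (m0, 0) else 0)"
    using n N by (intro sum_eq_single) (simp_all add: bmul_hbasis_vx_coact_pow[OF N m m0 n] mem_grid_iff)
  also have "bmul N q u a (hbasis (m, 0)) (vx_coact_pow N q u a n (0, n)) (m0, 0) = (if m = m0 then 1 else 0)"
    using n N by (subst bmul_hbasis_vx_coact_pow[OF N m m0 n]) (simp_all add: mem_grid_iff)
  also have "(if ((m + fst (0::nat, n)) mod N, snd (0::nat, n)) = k0 then (if m = m0 then 1 else 0) else 0) =
      (if (m mod N, n) = k0 \<and> m = m0 then (1::'a) else 0)"
    by auto
  also have "\<dots> = (if k = k0 then 1 else 0)"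
    using m kmn k0mn by auto
  finally show ?thesis .
qed

lemma bcoact_coeff:
  assumes N: "2 \<le> N" and k0: "k0 \<in> grid N"
  shows "bcoact N q u a b k0 (fst k0, 0) = b k0"
proof -
  have "bcoact N q u a b k0 (fst k0, 0) = (\<Sum>k\<in>grid N. if k = k0 then b k else 0)"
    unfolding bcoact_def by (rule sum.cong[OF refl]) (simp add: bcoact_basis_diag[OF N _ k0])
  then show ?thesis using k0 by simp
qed

section \<open>Comodule algebra maps into B\<close>

abbreviation Z1_one :: "letter list \<Rightarrow> 'r::comm_ring_1" where
  "Z1_one \<equiv> tletter (1, (0, 0))"

abbreviation Z1_g :: "letter list \<Rightarrow> 'r::comm_ring_1" where
  "Z1_g \<equiv> tletter (1, (1, 0))"

abbreviation Z1_x :: "letter list \<Rightarrow> 'r::comm_ring_1" where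
  "Z1_x \<equiv> tletter (1, (0, 1))"

lemma Tcoact_tletter:
  assumes l: "l \<in> grid N"
  shows "Tcoact N q (tletter (i, h)) l w = (\<Sum>j\<in>grid N. comult N q h l j * tletter (i, j) w)"
proof -
  have "{w. (tletter (i, h) :: letter list \<Rightarrow> 'a) w \<noteq> 0} = {[(i, h)]}" by (auto simp: tletter_def)
  then have "Tcoact N q (tletter (i, h)) l w = word_coact N q [(i, h)] l w"
    unfolding Tcoact_def by (simp add: tletter_def)
  also have "\<dots> = letter_coact N q (i, h) l w"
    unfolding word_coact_def by (simp add: tens_right_unit[OF _ _ l] tmul_tone tmul_zero_right)
  finally show ?thesis by (simp add: letter_coact_def)
qed

lemma Tcoact_Z1_one:
  assumes N: "2 \<le> N" and l: "l \<in> grid N"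
  shows "Tcoact N q Z1_one l = (if l = (0, 0) then Z1_one else (\<lambda>_. 0))"
proof
  fix w
  have "Tcoact N q Z1_one l w = (\<Sum>j\<in>grid N. (if l = (0, 0) then hbasis (0, 0) j else 0) * tletter (1, j) w)"
    unfolding Tcoact_tletter[OF l] using l by (intro sum.cong) (simp_all add: comult_one)
  then show "Tcoact N q Z1_one l w = (if l = (0, 0) then Z1_one else (\<lambda>_. 0)) w"
    using N by (simp add: sum_hbasis_mult mem_grid_iff)
qed

lemma Tcoact_Z1_g:
  assumes N: "2 \<le> N" and l: "l \<in> grid N"
  shows "Tcoact N q Z1_g l = (if l = (1, 0) then Z1_g else (\<lambda>_. 0))"
proof
  fix w
  have "Tcoact N q Z1_g l w = (\<Sum>j\<in>grid N. (if l = (1, 0) then hbasis (1, 0) j else 0) * tletter (1, j) w)"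
    unfolding Tcoact_tletter[OF l] using l by (intro sum.cong) (simp_all add: comult_g del: One_nat_def)
  then show "Tcoact N q Z1_g l w = (if l = (1, 0) then Z1_g else (\<lambda>_. 0)) w"
    using N by (simp add: sum_hbasis_mult mem_grid_iff)
qed

lemma Tcoact_Z1_x:
  assumes N: "2 \<le> N" and l: "l \<in> grid N"
  shows "Tcoact N q Z1_x l = (if l = (0, 1) then Z1_one else if l = (1, 0) then Z1_x else (\<lambda>_. 0))"
proof
  fix w
  have "Tcoact N q Z1_x l w = (\<Sum>j\<in>grid N. (if l = (0, 1) then hbasis (0, 0) j else if l = (1, 0) then hbasis (0, 1) j else 0) * tletter (1, j) w)"
    unfolding Tcoact_tletter[OF l] using l by (intro sum.cong) (simp_all add: comult_x del: One_nat_def)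
  then show "Tcoact N q Z1_x l w = (if l = (0, 1) then Z1_one else if l = (1, 0) then Z1_x else (\<lambda>_. 0)) w"
    using N by (simp add: sum_hbasis_mult mem_grid_iff)
qed

abbreviation Z1_qcomm :: "'r::comm_ring_1 \<Rightarrow> letter list \<Rightarrow> 'r" where
  "Z1_qcomm q \<equiv> \<lambda>w. tmul Z1_x Z1_g w - q * tmul Z1_g Z1_x w"

locale Taft_comod_map =
  fixes N :: nat and q u a :: "'r::comm_ring_1"
    and f :: "(letter list \<Rightarrow> 'r) \<Rightarrow> nat \<times> nat \<Rightarrow> 'r"
  assumes two_le_N: "2 \<le> N" and comod: "comod_alg_map N q u a f"
begin

lemma Tcar_generators: "Z1_one \<in> Tcar N" "Z1_g \<in> Tcar N" "Z1_x \<in> Tcar N"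
  using two_le_N by (auto intro: Tcar_tletter simp: mem_grid_iff)

lemma map_add: "p \<in> Tcar N \<Longrightarrow> r \<in> Tcar N \<Longrightarrow> z \<in> grid N \<Longrightarrow> f (\<lambda>w. p w + r w) z = f p z + f r z"
  using comod unfolding comod_alg_map_def by blast

lemma map_smult: "p \<in> Tcar N \<Longrightarrow> z \<in> grid N \<Longrightarrow> f (\<lambda>w. c * p w) z = c * f p z"
  using comod unfolding comod_alg_map_def by blast

lemma map_tmul: "p \<in> Tcar N \<Longrightarrow> r \<in> Tcar N \<Longrightarrow> z \<in> grid N \<Longrightarrow> f (tmul p r) z = bmul N q u a (f p) (f r) z"
  using comod unfolding comod_alg_map_def by blast

lemma map_tone: "z \<in> grid N \<Longrightarrow> f tone z = hbasis (0, 0) z"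
  using comod unfolding comod_alg_map_def by blast

lemma map_coaction:
  "p \<in> Tcar N \<Longrightarrow> l \<in> grid N \<Longrightarrow> z \<in> grid N \<Longrightarrow> bcoact N q u a (f p) l z = f (Tcoact N q p l) z"
  using comod unfolding comod_alg_map_def by blast

lemma map_zero: "z \<in> grid N \<Longrightarrow> f (\<lambda>_. 0) z = 0"
  using map_smult[OF Tcar_tone, of z 0] by simp

lemma map_diff:
  assumes "p \<in> Tcar N" "r \<in> Tcar N" "z \<in> grid N"
  shows "f (\<lambda>w. p w - r w) z = f p z - f r z"
  using map_add[OF assms(1) Tcar_smult[OF assms(2)] assms(3), of "- 1"] map_smult[OF assms(2,3), of "- 1"]
  by simp

lemma map_eq_coaction_coeff:
  assumes "p \<in> Tcar N" "k \<in> grid N"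
  shows "f p k = f (Tcoact N q p k) (fst k, 0)"
proof -
  have "(fst k, 0) \<in> grid N" using assms(2) two_le_N by (simp add: mem_grid_iff)
  then have "bcoact N q u a (f p) k (fst k, 0) = f (Tcoact N q p k) (fst k, 0)"
    using map_coaction assms by blast
  then show ?thesis using bcoact_coeff[OF two_le_N assms(2), of q u a "f p"] by simp
qed

lemma map_tpow: "p \<in> Tcar N \<Longrightarrow> z \<in> grid N \<Longrightarrow> f (tpow p n) z = bpow N q u a (f p) n z"
proof (induction n arbitrary: z)
  case 0
  then show ?case by (simp add: tpow_def map_tone)
next
  case (Suc n)
  then have "f (tpow p (Suc n)) z = bmul N q u a (f p) (f (tpow p n)) z"
    by (simp add: tpow_def map_tmul Tcar_tpow[unfolded tpow_def])
  also have "\<dots> = bmul N q u a (f p) (bpow N q u a (f p) n) z"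
    using Suc by (intro bmul_cong) auto
  finally show ?case by simp
qed

text \<open>The next three lemmas reflect \<open>\<Delta>(1) = 1 \<otimes> 1\<close>, \<open>\<Delta>(g) = g \<otimes> g\<close> and
  \<open>\<Delta>(x) = 1 \<otimes> x + x \<otimes> g\<close>.\<close>

lemma map_Z1_one:
  assumes z: "z \<in> grid N"
  shows "f Z1_one z = f Z1_one (0, 0) * bmono N u a 0 0 z"
proof -
  have "f Z1_one z = f (Tcoact N q Z1_one z) (fst z, 0)"
    using z by (intro map_eq_coaction_coeff Tcar_generators)
  then show ?thesis
    using two_le_N z map_zero[of "(fst z, 0)"] Tcoact_Z1_one[OF two_le_N z, of q]
    by (auto simp: bmono_0_0 hbasis_def mem_grid_iff)
qed

lemma map_Z1_g:
  assumes z: "z \<in> grid N"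
  shows "f Z1_g z = f Z1_g (1, 0) * bmono N u a 1 0 z"
proof -
  have "f Z1_g z = f (Tcoact N q Z1_g z) (fst z, 0)"
    using z by (intro map_eq_coaction_coeff Tcar_generators)
  then show ?thesis
    using two_le_N z map_zero[of "(fst z, 0)"] Tcoact_Z1_g[OF two_le_N z, of q]
    by (auto simp: bmono_def hbasis_def mem_grid_iff)
qed

lemma map_Z1_x:
  assumes z: "z \<in> grid N"
  shows "f Z1_x z = f Z1_one (0, 0) * bmono N u a 0 1 z + f Z1_x (1, 0) * bmono N u a 1 0 z"
proof -
  have "f Z1_x z = f (Tcoact N q Z1_x z) (fst z, 0)"
    using z by (intro map_eq_coaction_coeff Tcar_generators)
  then show ?thesis
    using two_le_N z map_zero[of "(fst z, 0)"] Tcoact_Z1_x[OF two_le_N z, of q]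
    by (auto simp: bmono_def hbasis_def mem_grid_iff)
qed

lemma map_tmul_bmono:
  assumes "p \<in> Tcar N" "r \<in> Tcar N" "z \<in> grid N"
    and "\<forall>y\<in>grid N. f p y = s * bmono N u a m 0 y" "\<forall>y\<in>grid N. f r y = t * bmono N u a m' j y"
  shows "f (tmul p r) z = s * t * bmono N u a (m + m') j z"
proof -
  have "f (tmul p r) z = bmul N q u a (\<lambda>y. s * bmono N u a m 0 y) (\<lambda>y. t * bmono N u a m' j y) z"
    using assms by (simp add: map_tmul bmul_cong[of N "f p" _ "f r"])
  then show ?thesis using two_le_N by (simp add: bmul_smult_left bmul_smult_right bmono_mult)
qed

lemma map_tpow_bmono:
  assumes "p \<in> Tcar N" "z \<in> grid N" and "\<forall>y\<in>grid N. f p y = s * bmono N u a m 0 y"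
  shows "f (tpow p n) z = s ^ n * bmono N u a (m * n) 0 z"
  using assms two_le_N
  by (simp add: map_tpow bpow_cong[of N "f p" "\<lambda>y. s * bmono N u a m 0 y"] bpow_smult_bmono)

lemma map_Z1_qcomm:
  assumes z: "z \<in> grid N"
  shows "f (Z1_qcomm q) z = f Z1_x (1, 0) * f Z1_g (1, 0) * (1 - q) * bmono N u a 2 0 z"
proof -
  let ?e = "f Z1_one (0, 0)" and ?c = "f Z1_g (1, 0)" and ?d = "f Z1_x (1, 0)"
  have T: "tmul Z1_x Z1_g \<in> Tcar N" "tmul Z1_g Z1_x \<in> Tcar N"
    by (intro Tcar_tmul Tcar_generators)+
  have "f (Z1_qcomm q) z = bmul N q u a (f Z1_x) (f Z1_g) z - q * bmul N q u a (f Z1_g) (f Z1_x) z"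
    by (simp only: map_diff map_smult map_tmul Tcar_smult Tcar_generators T z)
  also have "\<dots> = bmul N q u a (\<lambda>y. ?e * bmono N u a 0 1 y + ?d * bmono N u a 1 0 y) (\<lambda>y. ?c * bmono N u a 1 0 y) z
      - q * bmul N q u a (\<lambda>y. ?c * bmono N u a 1 0 y) (\<lambda>y. ?e * bmono N u a 0 1 y + ?d * bmono N u a 1 0 y) z"
    using map_Z1_x map_Z1_g by (intro arg_cong2[where f = "\<lambda>x y. x - q * y"] bmul_cong) auto
  also have "\<dots> = ?d * ?c * (1 - q) * bmono N u a 2 0 z"
    by (rule bmul_qcomm_vx_vg[OF two_le_N])
  finally show ?thesis .
qed

lemma map_tpow_Z1_x:
  assumes vanish: "\<forall>j. 0 < j \<and> j < N \<longrightarrow> qbinom q N j = 0" and z: "z \<in> grid N"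
  shows "f (tpow Z1_x N) z = (f Z1_x (1, 0) ^ N * u + f Z1_one (0, 0) ^ N * a) * bmono N u a 0 0 z"
proof -
  have "f (tpow Z1_x N) z = bpow N q u a (f Z1_x) N z"
    using Tcar_generators(3) z by (rule map_tpow)
  also have "\<dots> = qbinom_expansion N q u a (f Z1_one (0, 0)) (f Z1_x (1, 0)) N z"
    using two_le_N z map_Z1_x by (intro bpow_eq_qbinom_expansion) auto
  finally show ?thesis
    using two_le_N vanish by (simp add: qbinom_expansion_N bmono_0_0)
qed

lemma map_Pa:
  assumes z: "z \<in> grid N"
  shows "f (Pa N q a) z = f (tpow (Z1_qcomm q) N) z - (1 - q) ^ N * f (tmul (tpow Z1_g N) (tpow Z1_x N)) z
    + (1 - q) ^ N * a * f (tmul (tpow Z1_one N) (tpow Z1_g N)) z"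
proof -
  have T: "tpow (Z1_qcomm q) N \<in> Tcar N" "tmul (tpow Z1_g N) (tpow Z1_x N) \<in> Tcar N"
      "tmul (tpow Z1_one N) (tpow Z1_g N) \<in> Tcar N"
    by (intro Tcar_tpow Tcar_tmul Tcar_diff Tcar_smult Tcar_generators)+
  have "f (Pa N q a) z = f (\<lambda>w. tpow (Z1_qcomm q) N w - (1 - q) ^ N * tmul (tpow Z1_g N) (tpow Z1_x N) w) z
      + f (\<lambda>w. (1 - q) ^ N * a * tmul (tpow Z1_one N) (tpow Z1_g N) w) z"
    unfolding Pa_def Let_def by (intro map_add Tcar_diff Tcar_smult T z)
  also have "f (\<lambda>w. tpow (Z1_qcomm q) N w - (1 - q) ^ N * tmul (tpow Z1_g N) (tpow Z1_x N) w) z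
      = f (tpow (Z1_qcomm q) N) z - (1 - q) ^ N * f (tmul (tpow Z1_g N) (tpow Z1_x N)) z"
    by (simp only: map_diff map_smult Tcar_smult T z)
  also have "f (\<lambda>w. (1 - q) ^ N * a * tmul (tpow Z1_one N) (tpow Z1_g N) w) z
      = (1 - q) ^ N * a * f (tmul (tpow Z1_one N) (tpow Z1_g N)) z"
    by (rule map_smult[OF T(3) z])
  finally show ?thesis .
qed

lemma map_Pa_eq_0:
  assumes vanish: "\<forall>j. 0 < j \<and> j < N \<longrightarrow> qbinom q N j = 0" and z: "z \<in> grid N"
  shows "f (Pa N q a) z = 0"
proof -
  let ?e = "f Z1_one (0, 0)" and ?c = "f Z1_g (1, 0)" and ?d = "f Z1_x (1, 0)"
  have E: "\<forall>y\<in>grid N. f (tpow Z1_one N) y = ?e ^ N * bmono N u a 0 0 y"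
    using map_tpow_bmono[OF Tcar_generators(1), of _ ?e 0 N] map_Z1_one by simp
  have G: "\<forall>y\<in>grid N. f (tpow Z1_g N) y = ?c ^ N * bmono N u a N 0 y"
    using map_tpow_bmono[OF Tcar_generators(2), of _ ?c 1 N] map_Z1_g by simp
  have X: "\<forall>y\<in>grid N. f (tpow Z1_x N) y = (?d ^ N * u + ?e ^ N * a) * bmono N u a 0 0 y"
    using map_tpow_Z1_x[OF vanish] by blast
  have "Z1_qcomm q \<in> Tcar N"
    by (intro Tcar_diff Tcar_smult Tcar_tmul Tcar_generators)
  then have C: "f (tpow (Z1_qcomm q) N) z = (?d * ?c * (1 - q)) ^ N * bmono N u a (2 * N) 0 z"
    using map_tpow_bmono[OF _ z, of "Z1_qcomm q" "?d * ?c * (1 - q)" 2 N] map_Z1_qcomm by simp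
  have GX: "f (tmul (tpow Z1_g N) (tpow Z1_x N)) z = ?c ^ N * (?d ^ N * u + ?e ^ N * a) * bmono N u a N 0 z"
    using map_tmul_bmono[OF Tcar_tpow Tcar_tpow z G X] Tcar_generators by simp
  have EG: "f (tmul (tpow Z1_one N) (tpow Z1_g N)) z = ?e ^ N * ?c ^ N * bmono N u a N 0 z"
    using map_tmul_bmono[OF Tcar_tpow Tcar_tpow z E G] Tcar_generators by simp
  have "bmono N u a (2 * N) 0 z = u * bmono N u a N 0 z"
    using two_le_N by (simp add: bmono_def power2_eq_square)
  moreover have "(?d * ?c * (1 - q)) ^ N = ?d ^ N * ?c ^ N * (1 - q) ^ N"
    by (simp add: power_mult_distrib)
  ultimately show ?thesis
    unfolding map_Pa[OF z] C GX EG by (simp add: algebra_simps)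
qed

end

theorem lemma3p1:
  fixes N :: nat and q u a :: "'r::comm_ring_1"
  assumes "2 \<le> N"
    and "poly (map_poly of_int (cyclotomic_poly N)) q = 0"
    and "u dvd 1"
  shows "poly_H_identity N q u a (Pa N q a)"
  unfolding poly_H_identity_def
proof (intro allI impI ballI)
  fix f z
  assume "comod_alg_map N q u a f" and z: "z \<in> grid N"
  then interpret Taft_comod_map N q u a f
    using assms(1) by unfold_locales
  show "f (Pa N q a) z = 0"
    using qbinom_cyclotomic_root_eq_0[OF _ assms(2)] assms(1) z by (intro map_Pa_eq_0) auto
qed

end
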